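(* Assume the Setting below together with (A-sub), (A-outer), (A-sing). Let $\hat{\mathcal P}$ be any affine subspace of $\mathbb R^d$ and $\hat\mu_{\mathcal H}=\frac1{|\mathcal H|}\sum_{i\in\mathcal H}\Pi_{\hat{\mathcal P}}(g_i)$. Then $$\|\hat\mu_{\mathcal H}-\mathbb E\mu\|_2^2\le\frac2{|\mathcal H|}\sum_{i\in\mathcal H}\|g_i-\mathbb Eg_i\|_2^2+4\Big(\frac1{n-2f}+\frac{\delta^2}{\sigma^2}\Big)\Big(\ell_t(\hat{\mathcal P})+\sum_{i\in\mathcal H}\|g_i-\mathbb Eg_i\|_2^2\Big).$$ Consequently, if $\mathbb E\|g_i-\mathbb Eg_i\|_2^2\le\epsilon^2$ for all $i\in\mathcal H$, then $\mathbb E\|\hat\mu_{\mathcal H}-\mathbb E\mu\|_2^2\le2\epsilon^2+4\big(\frac1{n-2f}+\frac{\delta^2}{\sigma^2}\big)\big(\mathbb E\ell_t(\hat{\mathcal P})+|\mathcal H|\epsilon^2\big)$.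
   Context: Setting: let $n,f,c,d$ be positive integers with $c\ge2$, $d\ge c$, $n-2f\ge1$. The index set $\{1,\dots,n\}$ is partitioned as $\mathcal H\sqcup\mathcal B$ (honest and Byzantine clients) with $|\mathcal B|\le f$. Each client $i$ has a vector $g_i\in\mathbb R^d$; for $i\in\mathcal H$, $\mathbb Eg_i\in\mathbb R^d$ denotes a fixed vector (the expectation of $g_i$), and $\mathbb E\mu=\frac1{|\mathcal H|}\sum_{i\in\mathcal H}\mathbb Eg_i$. A $k$-dimensional affine subspace is $\mathcal P=\{U\lambda+m:\lambda\in\mathbb R^k\}$ with $U\in\mathbb R^{d\times k}$ having orthonormal columns and $m\in\mathbb R^d$; its orthogonal projection is $\Pi_{\mathcal P}(w)=UU^\top(w-m)+m$. The trimmed reconstruction loss of an affine subspace $\mathcal P$ is $\ell_t(\mathcal P)=\min_{S\subseteq\{1,\dots,n\},\,|S|=n-f}\sum_{i\in S}\|g_i-\Pi_{\mathcal P}(g_i)\|_2^2$. Assumptions: (A-sub) there is a $(c-1)$-dimensional affine subspace $\mathcal P^*$ containing $\mathbb Eg_i$ for all $i\in\mathcal H$; (A-outer) $\|\mathbb Eg_i-\mathbb E\mu\|_2\le\delta$ for all $i\in\mathcal H$; (A-sing) for every $S\subseteq\mathcal H$ with $|S|=n-2f$, the $d\times(n-2f)$ matrix with columns $\mathbb Eg_s-\frac1{n-2f}\sum_{s'\in S}\mathbb Eg_{s'}$ ($s\in S$) has $(c-1)$-th largest singular value at least $\sigma>0$. *)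

theory Defs
  imports "HOL-Analysis.Analysis" "HOL-Probability.Probability"
    "Jordan_Normal_Form.Char_Poly"
begin

(* An affine subspace of dimension k is given by k orthonormal vectors u 0, ..., u (k-1)
   (the columns of U) and an offset m. *)
definition orthonormal_cols :: "nat \<Rightarrow> (nat \<Rightarrow> 'v::real_inner) \<Rightarrow> bool" where
  "orthonormal_cols k u \<longleftrightarrow> (\<forall>j<k. \<forall>j'<k. u j \<bullet> u j' = (if j = j' then 1 else 0))"

definition affine_sub :: "nat \<Rightarrow> (nat \<Rightarrow> 'v::real_inner) \<Rightarrow> 'v \<Rightarrow> 'v set" where
  "affine_sub k u m = {(\<Sum>j<k. lam j *\<^sub>R u j) + m | lam. True}"

definition proj_aff :: "nat \<Rightarrow> (nat \<Rightarrow> 'v::real_inner) \<Rightarrow> 'v \<Rightarrow> 'v \<Rightarrow> 'v" where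
  "proj_aff k u m w = (\<Sum>j<k. (u j \<bullet> (w - m)) *\<^sub>R u j) + m"

definition trimmed_loss :: "nat \<Rightarrow> nat \<Rightarrow> (nat \<Rightarrow> 'v::real_inner) \<Rightarrow> nat \<Rightarrow> (nat \<Rightarrow> 'v) \<Rightarrow> 'v \<Rightarrow> real" where
  "trimmed_loss n f g k u m =
     Min {(\<Sum>i\<in>S. (norm (g i - proj_aff k u m (g i)))\<^sup>2) | S. S \<subseteq> {1..n} \<and> card S = n - f}"

(* For a matrix M whose columns are the vectors in the list vs, M^T M is the Gram matrix. *)
definition gram_mat :: "'v::real_inner list \<Rightarrow> real mat" where
  "gram_mat vs = mat (length vs) (length vs) (\<lambda>(i, j). vs ! i \<bullet> vs ! j)"

(* Singular values (with multiplicity, in decreasing order) of the matrix with columns vs: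
   square roots of the eigenvalues of M^T M, i.e. of the roots of its characteristic polynomial. *)
definition singular_values_desc :: "'v::real_inner list \<Rightarrow> real list" where
  "singular_values_desc vs =
     rev (sorted_list_of_multiset (image_mset sqrt (proots (char_poly (gram_mat vs)))))"

(* k-th largest singular value (1-indexed); 0 if k exceeds the number of columns *)
definition kth_singular_value :: "nat \<Rightarrow> 'v::real_inner list \<Rightarrow> real" where
  "kth_singular_value k vs =
     (if 1 \<le> k \<and> k \<le> length (singular_values_desc vs) then singular_values_desc vs ! (k - 1) else 0)"

end

theory Submission
  imports Defs
begin

text \<open>Let \<open>P\<close> and \<open>Q = I - P\<close> be the projections onto the direction space of the estimated
  subspace and onto its orthogonal complement. The error of the averaged projection is
  \<open>P \<epsilon> - Q (\<mu>\<^sub>H - m)\<close>, with \<open>\<epsilon>\<close> the mean noise of the honest clients; the two parts are orthogonal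
  and the first is bounded by the noise alone. An optimal trimmed set of \<open>n - f\<close> clients contains a
  set \<open>T\<close> of \<open>n - 2 f\<close> honest ones. Split \<open>\<mu>\<^sub>H - m = (\<mu>\<^sub>T - m) + (\<mu>\<^sub>H - \<mu>\<^sub>T)\<close>. The first term is an
  average over \<open>T\<close> of the expectations' residuals. The second lies in the direction space of the true
  \<open>(c - 1)\<close>-dimensional subspace and has norm at most \<open>\<delta>\<close>; as the centred expectations over \<open>T\<close>
  span that space with smallest singular value at least \<open>\<sigma>\<close>, its residual is at most \<open>\<delta>\<^sup>2/\<sigma>\<^sup>2\<close>
  times theirs (a Rayleigh quotient argument). Finally the residual of an expectation is at most
  twice the residual of the sample plus twice the noise, and the sample residuals over \<open>T\<close> are
  bounded by the trimmed loss because \<open>T\<close> lies in the optimal trimmed set. The bound in expectation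
  integrates the pointwise one.\<close>

section \<open>Eigenvalues of \<open>B B\<^sup>T\<close> and singular values of \<open>B\<close>\<close>

text \<open>The block matrix \<open>[[X I, B], [B\<^sup>T, I]]\<close> over \<open>\<real>[X]\<close>: eliminating its lower left block
  gives \<open>X\<^sup>k \<chi>(B\<^sup>T B) / X\<^sup>t\<close>, eliminating its upper right block gives \<open>\<chi>(B B\<^sup>T)\<close>.\<close>

definition sylvester_block :: "real mat \<Rightarrow> real poly mat" where
  "sylvester_block B =
     four_block_mat ([:0, 1:] \<cdot>\<^sub>m 1\<^sub>m (dim_row B)) (map_mat (\<lambda>a. [:a:]) B)
       (map_mat (\<lambda>a. [:a:]) (transpose_mat B)) (1\<^sub>m (dim_col B))"

lemma det_sylvester_block_transpose_mult:
  fixes B :: "real mat"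
  assumes B: "B \<in> carrier_mat k t"
  shows "[:0, 1:] ^ t * det (sylvester_block B) = [:0, 1:] ^ k * char_poly (transpose_mat B * B)"
proof -
  define x :: "real poly" where "x = [:0, 1:]"
  define Bp where "Bp = map_mat (\<lambda>a. [:a:]) B"
  define BpT where "BpT = map_mat (\<lambda>a. [:a:]) (transpose_mat B)"
  have Bp: "Bp \<in> carrier_mat k t" and BpT: "BpT \<in> carrier_mat t k"
    using B by (auto simp: Bp_def BpT_def)
  define M where "M = sylvester_block B"
  have M_eq: "M = four_block_mat (x \<cdot>\<^sub>m 1\<^sub>m k) Bp BpT (1\<^sub>m t)"
    using B unfolding M_def sylvester_block_def x_def Bp_def BpT_def by auto
  have M: "M \<in> carrier_mat (k + t) (k + t)" unfolding M_eq using Bp BpT by auto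
  define L where "L = four_block_mat (1\<^sub>m k) (0\<^sub>m k t) (- BpT) (x \<cdot>\<^sub>m 1\<^sub>m t)"
  have L: "L \<in> carrier_mat (k + t) (k + t)" unfolding L_def using BpT by auto
  have "L * M = four_block_mat (1\<^sub>m k * (x \<cdot>\<^sub>m 1\<^sub>m k) + 0\<^sub>m k t * BpT) (1\<^sub>m k * Bp + 0\<^sub>m k t * 1\<^sub>m t)
      (- BpT * (x \<cdot>\<^sub>m 1\<^sub>m k) + (x \<cdot>\<^sub>m 1\<^sub>m t) * BpT) (- BpT * Bp + (x \<cdot>\<^sub>m 1\<^sub>m t) * 1\<^sub>m t)"
    unfolding L_def M_eq by (rule mult_four_block_mat, insert Bp BpT, auto)
  also have "\<dots> = four_block_mat (x \<cdot>\<^sub>m 1\<^sub>m k) Bp (0\<^sub>m t k) (char_poly_matrix (transpose_mat B * B))"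
  proof -
    have "- BpT * (x \<cdot>\<^sub>m 1\<^sub>m k) + (x \<cdot>\<^sub>m 1\<^sub>m t) * BpT = 0\<^sub>m t k"
      by (rule eq_matI, insert BpT,
          auto simp: scalar_prod_def if_distrib if_distribR cong: if_cong)
    moreover have "- BpT * Bp + (x \<cdot>\<^sub>m 1\<^sub>m t) * 1\<^sub>m t = char_poly_matrix (transpose_mat B * B)"
      by (rule eq_matI, insert B Bp BpT,
          auto simp: scalar_prod_def char_poly_matrix_def Bp_def BpT_def x_def sum_to_poly mult.commute)
    ultimately show ?thesis using Bp BpT by simp
  qed
  finally have LM:
    "L * M = four_block_mat (x \<cdot>\<^sub>m 1\<^sub>m k) Bp (0\<^sub>m t k) (char_poly_matrix (transpose_mat B * B))" .
  have "det L = x ^ t" unfolding L_def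
    by (subst det_four_block_mat_upper_right_zero[of _ k _ t], insert BpT, auto)
  then have "x ^ t * det M = det (L * M)" using det_mult[OF L M] by simp
  also have "\<dots> = x ^ k * char_poly (transpose_mat B * B)" unfolding LM char_poly_def
    by (subst det_four_block_mat_lower_left_zero[of _ k _ t], insert Bp B, auto)
  finally show ?thesis unfolding M_def x_def .
qed

lemma det_sylvester_block:
  fixes B :: "real mat"
  assumes B: "B \<in> carrier_mat k t"
  shows "det (sylvester_block B) = char_poly (B * transpose_mat B)"
proof -
  define x :: "real poly" where "x = [:0, 1:]"
  define Bp where "Bp = map_mat (\<lambda>a. [:a:]) B"
  define BpT where "BpT = map_mat (\<lambda>a. [:a:]) (transpose_mat B)"
  have Bp: "Bp \<in> carrier_mat k t" and BpT: "BpT \<in> carrier_mat t k"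
    using B by (auto simp: Bp_def BpT_def)
  define M where "M = sylvester_block B"
  have M_eq: "M = four_block_mat (x \<cdot>\<^sub>m 1\<^sub>m k) Bp BpT (1\<^sub>m t)"
    using B unfolding M_def sylvester_block_def x_def Bp_def BpT_def by auto
  have M: "M \<in> carrier_mat (k + t) (k + t)" unfolding M_eq using Bp BpT by auto
  define L where "L = four_block_mat (1\<^sub>m k) (- Bp) (0\<^sub>m t k) (1\<^sub>m t)"
  have L: "L \<in> carrier_mat (k + t) (k + t)" unfolding L_def using Bp by auto
  have "L * M = four_block_mat (1\<^sub>m k * (x \<cdot>\<^sub>m 1\<^sub>m k) + - Bp * BpT) (1\<^sub>m k * Bp + - Bp * 1\<^sub>m t)
      (0\<^sub>m t k * (x \<cdot>\<^sub>m 1\<^sub>m k) + 1\<^sub>m t * BpT) (0\<^sub>m t k * Bp + 1\<^sub>m t * 1\<^sub>m t)"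
    unfolding L_def M_eq by (rule mult_four_block_mat, insert Bp BpT, auto)
  also have "\<dots> = four_block_mat (char_poly_matrix (B * transpose_mat B)) (0\<^sub>m k t) BpT (1\<^sub>m t)"
  proof -
    have "1\<^sub>m k * (x \<cdot>\<^sub>m 1\<^sub>m k) + - Bp * BpT = char_poly_matrix (B * transpose_mat B)"
      by (rule eq_matI, insert B Bp BpT,
          auto simp: scalar_prod_def char_poly_matrix_def Bp_def BpT_def x_def sum_to_poly mult.commute)
    moreover have "1\<^sub>m k * Bp + - Bp * 1\<^sub>m t = 0\<^sub>m k t" using Bp by (intro eq_matI) auto
    ultimately show ?thesis using Bp BpT by simp
  qed
  finally have LM:
    "L * M = four_block_mat (char_poly_matrix (B * transpose_mat B)) (0\<^sub>m k t) BpT (1\<^sub>m t)" .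
  have "det L = 1" unfolding L_def
    by (subst det_four_block_mat_lower_left_zero[of _ k _ t], insert Bp, auto)
  then have "det M = det (L * M)" using det_mult[OF L M] by simp
  also have "\<dots> = char_poly (B * transpose_mat B)" unfolding LM char_poly_def
    by (subst det_four_block_mat_upper_right_zero[of _ k _ t], insert B BpT, auto)
  finally show ?thesis unfolding M_def .
qed

lemma char_poly_mult_transpose:
  fixes B :: "real mat"
  assumes "B \<in> carrier_mat k t"
  shows "[:0, 1:] ^ t * char_poly (B * transpose_mat B)
    = [:0, 1:] ^ k * char_poly (transpose_mat B * B)"
  using det_sylvester_block_transpose_mult[OF assms] det_sylvester_block[OF assms] by simp

lemma kth_singular_value_ge_imp_size_proots:
  assumes \<sigma>: "\<sigma> > 0" and kv: "\<sigma> \<le> kth_singular_value k vs"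
  shows "k \<le> size (filter_mset (\<lambda>x. \<sigma>\<^sup>2 \<le> x) (proots (char_poly (gram_mat vs))))"
proof -
  define R where "R = proots (char_poly (gram_mat vs))"
  define L where "L = singular_values_desc vs"
  have L: "L = rev (sorted_list_of_multiset (image_mset sqrt R))"
    unfolding L_def R_def singular_values_desc_def by simp
  have kL: "1 \<le> k" "k \<le> length L" and Lk: "\<sigma> \<le> L ! (k - 1)"
    using kv \<sigma> unfolding kth_singular_value_def L_def[symmetric] by (auto split: if_splits)
  have desc: "L ! j \<le> L ! i" if "i \<le> j" "j < length L" for i j
  proof -
    have "rev L ! (length L - 1 - j) \<le> rev L ! (length L - 1 - i)"
      using that unfolding L by (intro sorted_nth_mono) auto
    then show ?thesis using that by (simp add: rev_nth)
  qed
  have "\<forall>y\<in>set (take k L). \<sigma> \<le> y"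
  proof
    fix y assume "y \<in> set (take k L)"
    then obtain i where i: "i < k" "y = L ! i" using kL by (auto simp: in_set_conv_nth)
    then have "L ! (k - 1) \<le> L ! i" using desc[of i "k - 1"] kL by simp
    then show "\<sigma> \<le> y" using i Lk by simp
  qed
  then have "k = length (filter (\<lambda>y. \<sigma> \<le> y) (take k L))"
    using kL by (simp add: min_def)
  also have "\<dots> \<le> length (filter (\<lambda>y. \<sigma> \<le> y) L)"
    by (metis append_take_drop_id filter_append length_append le_add1)
  also have "\<dots> = size (filter_mset (\<lambda>y. \<sigma> \<le> y) (image_mset sqrt R))"
    unfolding L by (metis mset_filter mset_rev mset_sorted_list_of_multiset size_mset)
  also have "filter_mset (\<lambda>y. \<sigma> \<le> y) (image_mset sqrt R)
      = image_mset sqrt (filter_mset (\<lambda>x. \<sigma> \<le> sqrt x) R)"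
    by (simp add: image_mset_filter_mset_swap)
  also have "filter_mset (\<lambda>x. \<sigma> \<le> sqrt x) R = filter_mset (\<lambda>x. \<sigma>\<^sup>2 \<le> x) R"
  proof (rule filter_mset_cong[OF refl])
    fix x
    show "\<sigma> \<le> sqrt x \<longleftrightarrow> \<sigma>\<^sup>2 \<le> x"
    proof
      assume le: "\<sigma> \<le> sqrt x"
      then have "0 < x" using \<sigma> by (metis not_less order_le_less_trans real_sqrt_le_0_iff)
      then show "\<sigma>\<^sup>2 \<le> x" using le \<sigma> by (metis power_mono less_imp_le real_sqrt_pow2)
    qed (rule real_le_rsqrt)
  qed
  finally show ?thesis unfolding R_def by simp
qed

text \<open>\<open>B B\<^sup>T\<close> and \<open>B\<^sup>T B\<close> share their nonzero eigenvalues; if \<open>B\<^sup>T B\<close> has at least \<open>k\<close> of them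
  \<open>\<ge> \<sigma>\<^sup>2\<close>, these are all \<open>k\<close> eigenvalues of \<open>B B\<^sup>T\<close>.\<close>

lemma proots_char_poly_mult_transpose_ge:
  fixes B :: "real mat"
  assumes B: "B \<in> carrier_mat k t" and \<sigma>: "\<sigma> > 0"
    and cnt: "k \<le> size (filter_mset (\<lambda>x. \<sigma>\<^sup>2 \<le> x) (proots (char_poly (transpose_mat B * B))))"
    and x: "x \<in># proots (char_poly (B * transpose_mat B))"
  shows "\<sigma>\<^sup>2 \<le> x"
proof -
  define P where "P = (\<lambda>x::real. \<sigma>\<^sup>2 \<le> x)"
  define CG where "CG = char_poly (transpose_mat B * B)"
  define CK where "CK = char_poly (B * transpose_mat B)"
  have "transpose_mat B * B \<in> carrier_mat t t" and "B * transpose_mat B \<in> carrier_mat k k"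
    using B by auto
  then have "monic CG" and dK: "degree CK = k" and "monic CK"
    using degree_monic_char_poly unfolding CG_def CK_def by blast+
  then have CG0: "CG \<noteq> 0" and CK0: "CK \<noteq> 0" by auto
  have X0: "([:0, 1:] :: real poly) ^ m \<noteq> 0" for m by simp
  have no_zero: "filter_mset P (proots (([:0, 1:] :: real poly) ^ m)) = {#}" for m
    using \<sigma> unfolding P_def by (induct m) (auto simp: proots_power)
  have "filter_mset P (proots CK) = filter_mset P (proots ([:0, 1:] ^ t * CK))"
    using proots_mult[OF X0 CK0] no_zero by simp
  also have "\<dots> = filter_mset P (proots ([:0, 1:] ^ k * CG))"
    using char_poly_mult_transpose[OF B] unfolding CG_def CK_def by simp
  also have "\<dots> = filter_mset P (proots CG)"
    using proots_mult[OF X0 CG0] no_zero by simp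
  finally have eq: "filter_mset P (proots CK) = filter_mset P (proots CG)" .
  have "size (proots CK) \<le> k" using size_proots_le[of CK] dK by simp
  also have "k \<le> size (filter_mset P (proots CK))" using cnt eq unfolding P_def CG_def by simp
  finally have "filter_mset P (proots CK) = proots CK"
    by (metis multiset_filter_subset subset_mset.less_le not_less mset_subset_size)
  then show ?thesis using x unfolding P_def CK_def by (metis filter_mset_eq_conv)
qed

section \<open>Projection onto the span of an orthonormal family\<close>

definition span_proj :: "nat \<Rightarrow> (nat \<Rightarrow> 'v::real_inner) \<Rightarrow> 'v \<Rightarrow> 'v" where
  "span_proj k u x = (\<Sum>j<k. (u j \<bullet> x) *\<^sub>R u j)"

definition span_perp :: "nat \<Rightarrow> (nat \<Rightarrow> 'v::real_inner) \<Rightarrow> 'v \<Rightarrow> 'v" where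
  "span_perp k u x = x - span_proj k u x"

lemma proj_aff_eq_span_proj: "proj_aff k u m x = span_proj k u (x - m) + m"
  unfolding proj_aff_def span_proj_def ..

lemma linear_span_proj: "linear (span_proj k u)"
  unfolding span_proj_def
  by (rule linearI) (auto simp: inner_add_right scaleR_add_left sum.distrib scaleR_sum_right)

lemma linear_span_perp: "linear (span_perp k u)"
  unfolding span_perp_def by (intro linear_compose_sub linear_ident linear_span_proj)

lemma span_proj_mem_span: "span_proj k u x \<in> span (u ` {..<k})"
  unfolding span_proj_def by (intro span_sum span_scale span_base) auto

lemma inner_span_proj_left: "span_proj k u x \<bullet> y = (\<Sum>j<k. (u j \<bullet> x) * (u j \<bullet> y))"
  unfolding span_proj_def by (simp add: inner_sum_left)

lemma orthonormal_cols_norm: "orthonormal_cols k u \<Longrightarrow> i < k \<Longrightarrow> norm (u i) = 1"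
  unfolding orthonormal_cols_def by (metis norm_eq_sqrt_inner real_sqrt_one)

lemma span_proj_basis:
  assumes "orthonormal_cols k u" "i < k"
  shows "span_proj k u (u i) = u i"
proof -
  have "span_proj k u (u i) = (\<Sum>j<k. if i = j then u j else 0)"
    using assms unfolding span_proj_def orthonormal_cols_def by (intro sum.cong) auto
  also have "\<dots> = u i" using assms(2) by simp
  finally show ?thesis .
qed

lemma span_proj_of_mem_span:
  assumes u: "orthonormal_cols k u" and x: "x \<in> span (u ` {..<k})"
  shows "span_proj k u x = x"
  using x
proof (induct rule: span_induct_alt)
  case (step c x y)
  then obtain i where "i < k" "x = u i" by auto
  then show ?case using step(2) span_proj_basis[OF u]
    using linear_span_proj[of k u] by (simp add: linear_add linear_scale)
qed (simp add: span_proj_def)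

lemma inner_eq_sum_of_mem_span:
  "orthonormal_cols k u \<Longrightarrow> x \<in> span (u ` {..<k}) \<Longrightarrow> x \<bullet> y = (\<Sum>j<k. (u j \<bullet> x) * (u j \<bullet> y))"
  by (metis span_proj_of_mem_span inner_span_proj_left)

lemma inner_span_proj_of_mem_span:
  assumes u: "orthonormal_cols k u" and v: "v \<in> span (u ` {..<k})"
  shows "v \<bullet> span_proj k u x = v \<bullet> x"
  using inner_eq_sum_of_mem_span[OF u v, of x]
  by (simp add: span_proj_def inner_sum_right inner_commute mult.commute)

lemma inner_span_proj_span_perp:
  "orthonormal_cols k u \<Longrightarrow> span_proj k u x \<bullet> span_perp k u y = 0"
  unfolding span_perp_def
  by (simp add: inner_diff_right inner_span_proj_of_mem_span span_proj_mem_span)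

lemma inner_span_perp_span_perp:
  assumes "orthonormal_cols k u"
  shows "span_perp k u x \<bullet> span_perp k u y = x \<bullet> span_perp k u y"
proof -
  have "x \<bullet> span_perp k u y = (span_proj k u x + span_perp k u x) \<bullet> span_perp k u y"
    by (simp add: span_perp_def)
  then show ?thesis using inner_span_proj_span_perp[OF assms] by (simp add: inner_add_left)
qed

lemma norm_sq_span_proj_span_perp:
  "orthonormal_cols k u \<Longrightarrow> (norm x)\<^sup>2 = (norm (span_proj k u x))\<^sup>2 + (norm (span_perp k u x))\<^sup>2"
  using norm_add_Pythagorean[of "span_proj k u x" "span_perp k u x"] inner_span_proj_span_perp[of k u x x]
  by (simp add: real_inner_class.orthogonal_def span_perp_def)

lemma norm_span_proj_le: "orthonormal_cols k u \<Longrightarrow> (norm (span_proj k u x))\<^sup>2 \<le> (norm x)\<^sup>2"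
  using norm_sq_span_proj_span_perp[of k u x] by simp

lemma norm_span_perp_le: "orthonormal_cols k u \<Longrightarrow> (norm (span_perp k u x))\<^sup>2 \<le> (norm x)\<^sup>2"
  using norm_sq_span_proj_span_perp[of k u x] by simp

section \<open>A variational lower bound from the smallest singular value\<close>

definition gram_form :: "'v::real_inner list \<Rightarrow> 'v \<Rightarrow> real" where
  "gram_form vs y = (\<Sum>s<length vs. (vs ! s \<bullet> y)\<^sup>2)"

definition coord_mat :: "nat \<Rightarrow> (nat \<Rightarrow> 'v::real_inner) \<Rightarrow> 'v list \<Rightarrow> real mat" where
  "coord_mat k u vs = mat k (length vs) (\<lambda>(j, s). vs ! s \<bullet> u j)"

lemma coord_mat_carrier: "coord_mat k u vs \<in> carrier_mat k (length vs)"
  unfolding coord_mat_def by simp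

lemma gram_form_scaleR: "gram_form vs (c *\<^sub>R y) = c\<^sup>2 * gram_form vs y"
  unfolding gram_form_def by (simp add: power_mult_distrib sum_distrib_left)

lemma gram_mat_eq_coord_mat:
  assumes u: "orthonormal_cols k u" and vs: "set vs \<subseteq> span (u ` {..<k})"
  shows "gram_mat vs = transpose_mat (coord_mat k u vs) * coord_mat k u vs"
proof (rule eq_matI)
  fix i j assume "i < dim_row (transpose_mat (coord_mat k u vs) * coord_mat k u vs)"
    "j < dim_col (transpose_mat (coord_mat k u vs) * coord_mat k u vs)"
  then have i: "i < length vs" and j: "j < length vs" by (auto simp: coord_mat_def)
  have "vs ! i \<in> span (u ` {..<k})" using vs i by (auto dest: nth_mem)
  then have "vs ! i \<bullet> vs ! j = (\<Sum>l<k. (vs ! i \<bullet> u l) * (vs ! j \<bullet> u l))"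
    using inner_eq_sum_of_mem_span[OF u] by (simp add: inner_commute)
  then show "gram_mat vs $$ (i, j) = (transpose_mat (coord_mat k u vs) * coord_mat k u vs) $$ (i, j)"
    using i j by (simp add: gram_mat_def coord_mat_def scalar_prod_def atLeast0LessThan)
qed (auto simp: gram_mat_def coord_mat_def)

lemma gram_form_attains_min_on_sphere:
  fixes W :: "'v::euclidean_space set"
  assumes W: "subspace W" and w: "w \<in> W" "w \<noteq> 0"
  obtains z where "z \<in> W" "norm z = 1" "\<And>y. y \<in> W \<Longrightarrow> gram_form vs z * (norm y)\<^sup>2 \<le> gram_form vs y"
proof -
  define Sph where "Sph = W \<inter> sphere 0 1"
  have scaled: "(1 / norm y) *\<^sub>R y \<in> Sph" if "y \<in> W" "y \<noteq> 0" for y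
    using that W unfolding Sph_def by (auto intro: subspace_scale)
  have "compact Sph"
    unfolding Sph_def by (rule closed_Int_compact[OF closed_subspace[OF W] compact_sphere])
  moreover have "continuous_on Sph (gram_form vs)" unfolding gram_form_def by (intro continuous_intros)
  ultimately obtain z where z: "z \<in> Sph" and min: "\<And>y. y \<in> Sph \<Longrightarrow> gram_form vs z \<le> gram_form vs y"
    using continuous_attains_inf[of Sph "gram_form vs"] scaled[OF w] by blast
  have "gram_form vs z * (norm y)\<^sup>2 \<le> gram_form vs y" if y: "y \<in> W" for y
  proof (cases "y = 0")
    case False
    have "gram_form vs z \<le> gram_form vs y / (norm y)\<^sup>2"
      using min[OF scaled[OF y False]] by (simp add: gram_form_scaleR power_divide)
    then show ?thesis using False by (simp add: pos_le_divide_eq)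
  qed (simp add: gram_form_def)
  then show ?thesis using that z unfolding Sph_def by auto
qed

lemma linear_quadratic_nonneg_imp_zero:
  fixes b c :: real
  assumes nonneg: "\<And>e. 0 \<le> 2 * e * b + e\<^sup>2 * c" and c: "c \<ge> 0"
  shows "b = 0"
proof (rule ccontr)
  assume b: "b \<noteq> 0"
  define e where "e = - b / (c + 1)"
  have ec: "e * (c + 1) = - b" unfolding e_def using c by simp
  have "(c + 1)\<^sup>2 * (2 * e * b + e\<^sup>2 * c) = 2 * b * (c + 1) * (e * (c + 1)) + (e * (c + 1))\<^sup>2 * c"
    by (simp add: power2_eq_square algebra_simps)
  also have "\<dots> = b\<^sup>2 * (- c - 2)" unfolding ec by (simp add: power2_eq_square algebra_simps)
  also have "\<dots> < 0" using b c by (intro mult_pos_neg) auto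
  finally show False using nonneg[of e] c by (simp add: mult_less_0_iff)
qed

lemma gram_form_min_stationary:
  assumes W: "subspace W" and z: "z \<in> W" "norm z = 1"
    and min: "\<And>y. y \<in> W \<Longrightarrow> gram_form vs z * (norm y)\<^sup>2 \<le> gram_form vs y"
    and w: "w \<in> W"
  shows "(\<Sum>s<length vs. (vs ! s \<bullet> z) * (vs ! s \<bullet> w)) = gram_form vs z * (z \<bullet> w)"
proof -
  define b where "b = (\<Sum>s<length vs. (vs ! s \<bullet> z) * (vs ! s \<bullet> w)) - gram_form vs z * (z \<bullet> w)"
  define c where "c = gram_form vs w - gram_form vs z * (norm w)\<^sup>2"
  have "0 \<le> 2 * e * b + e\<^sup>2 * c" for e
  proof -
    have "z + e *\<^sub>R w \<in> W" using z w W by (intro subspace_add subspace_scale) auto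
    then have "gram_form vs z * (norm (z + e *\<^sub>R w))\<^sup>2 \<le> gram_form vs (z + e *\<^sub>R w)" by (rule min)
    moreover have "gram_form vs (z + e *\<^sub>R w)
        = gram_form vs z + 2 * e * (\<Sum>s<length vs. (vs ! s \<bullet> z) * (vs ! s \<bullet> w)) + e\<^sup>2 * gram_form vs w"
      unfolding gram_form_def
      by (simp add: power2_eq_square algebra_simps sum.distrib sum_distrib_left)
    moreover have "(norm (z + e *\<^sub>R w))\<^sup>2 = 1 + 2 * e * (z \<bullet> w) + e\<^sup>2 * (norm w)\<^sup>2"
    proof -
      have "(norm (z + e *\<^sub>R w))\<^sup>2 = (z + e *\<^sub>R w) \<bullet> (z + e *\<^sub>R w)"
        by (rule power2_norm_eq_inner)
      also have "\<dots> = z \<bullet> z + 2 * e * (z \<bullet> w) + e\<^sup>2 * (w \<bullet> w)"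
        by (simp add: inner_commute power2_eq_square algebra_simps)
      finally have "(norm (z + e *\<^sub>R w))\<^sup>2 = z \<bullet> z + 2 * e * (z \<bullet> w) + e\<^sup>2 * (w \<bullet> w)" .
      then show ?thesis using z(2) by (simp add: power2_norm_eq_inner[symmetric])
    qed
    ultimately show ?thesis unfolding b_def c_def by (simp add: algebra_simps)
  qed
  moreover have "c \<ge> 0" using min[OF w] unfolding c_def by simp
  ultimately show ?thesis using linear_quadratic_nonneg_imp_zero unfolding b_def by fastforce
qed

lemma stationary_value_in_proots:
  fixes u :: "nat \<Rightarrow> 'v::euclidean_space"
  assumes u: "orthonormal_cols k u" and vs: "set vs \<subseteq> span (u ` {..<k})"
    and z: "z \<in> span (u ` {..<k})" "z \<noteq> 0"
    and stat: "\<And>w. w \<in> span (u ` {..<k}) \<Longrightarrow> (\<Sum>s<length vs. (vs ! s \<bullet> z) * (vs ! s \<bullet> w)) = lam * (z \<bullet> w)"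
  shows "lam \<in># proots (char_poly (coord_mat k u vs * transpose_mat (coord_mat k u vs)))"
proof -
  define t where "t = length vs"
  define K where "K = coord_mat k u vs * transpose_mat (coord_mat k u vs)"
  have K: "K \<in> carrier_mat k k"
    unfolding K_def by (metis coord_mat_carrier mult_carrier_mat transpose_carrier_mat)
  have K_entry: "K $$ (i, l) = (\<Sum>s<t. (vs ! s \<bullet> u i) * (vs ! s \<bullet> u l))" if "i < k" "l < k" for i l
    using that unfolding K_def t_def by (simp add: coord_mat_def scalar_prod_def atLeast0LessThan)
  define y where "y = vec k (\<lambda>j. u j \<bullet> z)"
  have "K *\<^sub>v y = lam \<cdot>\<^sub>v y"
  proof (rule eq_vecI)
    fix i assume "i < dim_vec (lam \<cdot>\<^sub>v y)"
    then have i: "i < k" unfolding y_def by simp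
    have "(K *\<^sub>v y) $ i = (\<Sum>l<k. K $$ (i, l) * (u l \<bullet> z))"
      using i K by (simp add: scalar_prod_def y_def atLeast0LessThan)
    also have "\<dots> = (\<Sum>l<k. \<Sum>s<t. (vs ! s \<bullet> u i) * ((u l \<bullet> vs ! s) * (u l \<bullet> z)))"
      using i by (intro sum.cong refl) (simp add: K_entry sum_distrib_right inner_commute mult.assoc)
    also have "\<dots> = (\<Sum>s<t. (vs ! s \<bullet> u i) * (\<Sum>l<k. (u l \<bullet> vs ! s) * (u l \<bullet> z)))"
      by (subst sum.swap) (simp add: sum_distrib_left)
    also have "\<dots> = (\<Sum>s<t. (vs ! s \<bullet> z) * (vs ! s \<bullet> u i))"
    proof (intro sum.cong refl)
      fix s assume "s \<in> {..<t}"
      then have "vs ! s \<in> span (u ` {..<k})" using vs unfolding t_def by (auto dest: nth_mem)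
      then show "(vs ! s \<bullet> u i) * (\<Sum>l<k. (u l \<bullet> vs ! s) * (u l \<bullet> z)) = (vs ! s \<bullet> z) * (vs ! s \<bullet> u i)"
        using inner_eq_sum_of_mem_span[OF u, of "vs ! s" z] by simp
    qed
    also have "\<dots> = lam * (u i \<bullet> z)"
      using stat[of "u i"] i unfolding t_def by (simp add: inner_commute span_base)
    finally show "(K *\<^sub>v y) $ i = (lam \<cdot>\<^sub>v y) $ i" using i unfolding y_def by simp
  qed (use K in \<open>auto simp: y_def\<close>)
  moreover have "y \<noteq> 0\<^sub>v k"
  proof
    assume "y = 0\<^sub>v k"
    then have "\<forall>j<k. u j \<bullet> z = 0" unfolding y_def by (metis index_vec index_zero_vec(1))
    then have "span_proj k u z = 0" unfolding span_proj_def by simp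
    then show False using z span_proj_of_mem_span[OF u] by simp
  qed
  ultimately have "eigenvalue K lam" unfolding eigenvalue_def eigenvector_def
    using K by (intro exI[of _ y]) (auto simp: y_def)
  then have "poly (char_poly K) lam = 0" using eigenvalue_root_char_poly[OF K] by simp
  moreover have "char_poly K \<noteq> 0" using degree_monic_char_poly[OF K] by auto
  ultimately show ?thesis unfolding K_def by simp
qed

lemma gram_form_ge_kth_singular_value:
  fixes u :: "nat \<Rightarrow> 'v::euclidean_space"
  assumes u: "orthonormal_cols k u" and k: "k \<ge> 1" and vs: "set vs \<subseteq> span (u ` {..<k})"
    and \<sigma>: "\<sigma> > 0" and kv: "\<sigma> \<le> kth_singular_value k vs"
    and z: "z \<in> span (u ` {..<k})"
  shows "\<sigma>\<^sup>2 * (norm z)\<^sup>2 \<le> gram_form vs z"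
proof -
  define W where "W = span (u ` {..<k})"
  have W: "subspace W" unfolding W_def by simp
  have "u 0 \<in> W" "u 0 \<noteq> 0" using orthonormal_cols_norm[OF u, of 0] k
    unfolding W_def by (auto intro: span_base)
  then obtain z0 where z0: "z0 \<in> W" "norm z0 = 1"
    and min: "\<And>y. y \<in> W \<Longrightarrow> gram_form vs z0 * (norm y)\<^sup>2 \<le> gram_form vs y"
    using gram_form_attains_min_on_sphere[OF W] by blast
  have "gram_form vs z0 \<in># proots (char_poly (coord_mat k u vs * transpose_mat (coord_mat k u vs)))"
    using z0 gram_form_min_stationary[OF W z0 min] unfolding W_def
    by (intro stationary_value_in_proots[OF u vs]) auto
  moreover have "k \<le> size (filter_mset (\<lambda>x. \<sigma>\<^sup>2 \<le> x)
      (proots (char_poly (transpose_mat (coord_mat k u vs) * coord_mat k u vs))))"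
    using kth_singular_value_ge_imp_size_proots[OF \<sigma> kv] gram_mat_eq_coord_mat[OF u vs] by simp
  ultimately have "\<sigma>\<^sup>2 \<le> gram_form vs z0"
    by (intro proots_char_poly_mult_transpose_ge[OF coord_mat_carrier \<sigma>])
  then have "\<sigma>\<^sup>2 * (norm z)\<^sup>2 \<le> gram_form vs z0 * (norm z)\<^sup>2" by (simp add: mult_right_mono)
  also have "\<dots> \<le> gram_form vs z" using min z unfolding W_def by simp
  finally show ?thesis .
qed

lemma inner_sq_le_norm_sq: "(x \<bullet> y)\<^sup>2 \<le> (norm x)\<^sup>2 * (norm y)\<^sup>2"
proof -
  have "\<bar>x \<bullet> y\<bar>\<^sup>2 \<le> (norm x * norm y)\<^sup>2"
    by (intro power_mono Cauchy_Schwarz_ineq2) simp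
  then show ?thesis by (simp add: power_mult_distrib)
qed

text \<open>If \<open>w\<close> lies in the span \<open>W\<close> of the well-conditioned family \<open>vs\<close>, then its distance from any
  subspace is controlled by the distances of the \<open>vs\<close>. With \<open>q\<close> the perpendicular part of \<open>w\<close>
  and \<open>p\<close> the projection of \<open>q\<close> onto \<open>W\<close>: \<open>\<parallel>q\<parallel>\<^sup>2 = p \<bullet> w\<close>, and \<open>\<sigma>\<^sup>2 \<parallel>p\<parallel>\<^sup>2 \<le> \<Sum>(v \<bullet> q)\<^sup>2\<close>.\<close>

lemma norm_span_perp_le_kth_singular_value:
  fixes u u' :: "nat \<Rightarrow> 'v::euclidean_space"
  assumes u: "orthonormal_cols k u" and k: "k \<ge> 1" and u': "orthonormal_cols k' u'"
    and vs: "set vs \<subseteq> span (u ` {..<k})" and \<sigma>: "\<sigma> > 0" and kv: "\<sigma> \<le> kth_singular_value k vs"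
    and w: "w \<in> span (u ` {..<k})"
  shows "(norm (span_perp k' u' w))\<^sup>2
    \<le> (norm w)\<^sup>2 / \<sigma>\<^sup>2 * (\<Sum>s<length vs. (norm (span_perp k' u' (vs ! s)))\<^sup>2)"
proof -
  define Q where "Q = span_perp k' u'"
  define q where "q = Q w"
  define p where "p = span_proj k u q"
  define A where "A = (\<Sum>s<length vs. (norm (Q (vs ! s)))\<^sup>2)"
  have "\<sigma>\<^sup>2 * (norm p)\<^sup>2 \<le> gram_form vs p"
    using gram_form_ge_kth_singular_value[OF u k vs \<sigma> kv] span_proj_mem_span unfolding p_def by blast
  also have "\<dots> = (\<Sum>s<length vs. (Q (vs ! s) \<bullet> q)\<^sup>2)"
    unfolding gram_form_def p_def q_def Q_def
    using vs inner_span_proj_of_mem_span[OF u] inner_span_perp_span_perp[OF u']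
    by (intro sum.cong refl) (auto dest: nth_mem)
  also have "\<dots> \<le> (\<Sum>s<length vs. (norm (Q (vs ! s)))\<^sup>2 * (norm q)\<^sup>2)"
    by (intro sum_mono inner_sq_le_norm_sq)
  also have "\<dots> = A * (norm q)\<^sup>2" unfolding A_def by (simp add: sum_distrib_right)
  finally have p_le: "\<sigma>\<^sup>2 * (norm p)\<^sup>2 \<le> A * (norm q)\<^sup>2" .
  have "(norm q)\<^sup>2 = w \<bullet> p"
    using inner_span_perp_span_perp[OF u'] inner_span_proj_of_mem_span[OF u w]
    by (simp add: power2_norm_eq_inner p_def q_def Q_def)
  then have "((norm q)\<^sup>2)\<^sup>2 \<le> (norm w)\<^sup>2 * (norm p)\<^sup>2"
    by (simp add: inner_sq_le_norm_sq)
  also have "\<dots> \<le> (norm w)\<^sup>2 * (A * (norm q)\<^sup>2 / \<sigma>\<^sup>2)"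
    using p_le \<sigma> by (intro mult_left_mono) (auto simp: pos_le_divide_eq mult.commute)
  finally have le: "(norm q)\<^sup>2 * (norm q)\<^sup>2 \<le> (norm q)\<^sup>2 * ((norm w)\<^sup>2 / \<sigma>\<^sup>2 * A)"
    by (simp add: power2_eq_square[of "(norm q)\<^sup>2"] field_simps)
  have "(norm q)\<^sup>2 \<le> (norm w)\<^sup>2 / \<sigma>\<^sup>2 * A"
  proof (cases "q = 0")
    case True
    then show ?thesis unfolding A_def by (simp add: sum_nonneg)
  next
    case False
    then have "0 < (norm q)\<^sup>2" by simp
    then show ?thesis using le mult_le_cancel_left_pos by blast
  qed
  then show ?thesis unfolding q_def Q_def A_def .
qed

section \<open>Averages\<close>

definition mean :: "'a set \<Rightarrow> ('a \<Rightarrow> 'v::real_vector) \<Rightarrow> 'v" where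
  "mean A x = (1 / real (card A)) *\<^sub>R (\<Sum>i\<in>A. x i)"

lemma mean_const: "finite A \<Longrightarrow> A \<noteq> {} \<Longrightarrow> mean A (\<lambda>_. c) = c"
  by (simp add: mean_def sum_constant_scaleR)

lemma mean_diff: "mean A (\<lambda>i. x i - y i) = mean A x - mean A y"
  by (simp add: mean_def sum_subtractf scaleR_diff_right)

lemma linear_mean: "linear L \<Longrightarrow> L (mean A x) = mean A (\<lambda>i. L (x i))"
  by (simp add: mean_def linear_sum linear_scale)

lemma mean_in_subspace: "subspace W \<Longrightarrow> (\<And>i. i \<in> A \<Longrightarrow> x i \<in> W) \<Longrightarrow> mean A x \<in> W"
  unfolding mean_def by (intro subspace_scale subspace_sum) auto

lemma sum_norm_sq_sub_mean:
  fixes x :: "'a \<Rightarrow> 'v::real_inner"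
  assumes "finite A" "A \<noteq> {}"
  shows "(\<Sum>i\<in>A. (norm (x i - mean A x))\<^sup>2)
    = (\<Sum>i\<in>A. (norm (x i))\<^sup>2) - real (card A) * (norm (mean A x))\<^sup>2"
proof -
  have sum_eq: "(\<Sum>i\<in>A. x i) = real (card A) *\<^sub>R mean A x" using assms by (simp add: mean_def)
  have "(\<Sum>i\<in>A. (norm (x i - mean A x))\<^sup>2)
      = (\<Sum>i\<in>A. (norm (x i))\<^sup>2 - 2 * (x i \<bullet> mean A x) + (norm (mean A x))\<^sup>2)"
    by (intro sum.cong refl)
      (simp add: power2_norm_eq_inner inner_diff_left inner_diff_right inner_commute)
  also have "\<dots> = (\<Sum>i\<in>A. (norm (x i))\<^sup>2) - 2 * ((\<Sum>i\<in>A. x i) \<bullet> mean A x)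
      + real (card A) * (norm (mean A x))\<^sup>2"
    by (simp add: sum.distrib sum_subtractf inner_sum_left sum_distrib_left)
  finally show ?thesis unfolding sum_eq by (simp add: power2_norm_eq_inner)
qed

lemma norm_mean_sq_le:
  fixes x :: "'a \<Rightarrow> 'v::real_inner"
  assumes "finite A" "A \<noteq> {}"
  shows "(norm (mean A x))\<^sup>2 \<le> (\<Sum>i\<in>A. (norm (x i))\<^sup>2) / real (card A)"
proof -
  have "0 < real (card A)" using assms by (simp add: card_gt_0_iff)
  moreover have "real (card A) * (norm (mean A x))\<^sup>2 \<le> (\<Sum>i\<in>A. (norm (x i))\<^sup>2)"
    using sum_norm_sq_sub_mean[OF assms, of x] sum_nonneg[of A "\<lambda>i. (norm (x i - mean A x))\<^sup>2"] by simp
  ultimately show ?thesis by (simp add: pos_le_divide_eq mult.commute)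
qed

lemma sum_norm_sq_sub_mean_le:
  fixes x :: "'a \<Rightarrow> 'v::real_inner"
  assumes "finite A" "A \<noteq> {}"
  shows "(\<Sum>i\<in>A. (norm (x i - mean A x))\<^sup>2) \<le> (\<Sum>i\<in>A. (norm (x i))\<^sup>2)"
  using sum_norm_sq_sub_mean[OF assms, of x] by simp

lemma norm_mean_le:
  assumes "finite A" "A \<noteq> {}" "\<And>i. i \<in> A \<Longrightarrow> norm (x i) \<le> \<delta>"
  shows "norm (mean A x) \<le> \<delta>"
proof -
  have "norm (mean A x) \<le> (\<Sum>i\<in>A. norm (x i)) / real (card A)"
    unfolding mean_def using norm_sum[of x A] by (simp add: divide_right_mono)
  also have "\<dots> \<le> (\<Sum>i\<in>A. \<delta>) / real (card A)" using assms by (intro divide_right_mono sum_mono) auto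
  also have "\<dots> = \<delta>" using assms by simp
  finally show ?thesis .
qed

lemma norm_add_sq_le: "(norm (a + b))\<^sup>2 \<le> 2 * (norm a)\<^sup>2 + 2 * (norm b)\<^sup>2"
proof -
  have "(norm (a + b))\<^sup>2 \<le> (norm a + norm b)\<^sup>2" by (intro power_mono norm_triangle_ineq) auto
  also have "\<dots> \<le> 2 * (norm a)\<^sup>2 + 2 * (norm b)\<^sup>2" using sum_squares_bound[of "norm a" "norm b"]
    by (simp add: power2_eq_square algebra_simps)
  finally show ?thesis .
qed

lemma sum_nth_map_sorted_list_of_set:
  assumes "finite T"
  shows "(\<Sum>s<length (map F (sorted_list_of_set T)). f (map F (sorted_list_of_set T) ! s))
    = (\<Sum>i\<in>T. f (F i))"
proof -
  have "(\<Sum>s<length (map F (sorted_list_of_set T)). f (map F (sorted_list_of_set T) ! s))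
      = sum_list (map (\<lambda>i. f (F i)) (sorted_list_of_set T))"
    by (simp add: sum_list_sum_nth atLeast0LessThan)
  also have "\<dots> = (\<Sum>i\<in>T. f (F i))" using assms by (simp add: sum_list_distinct_conv_sum_set)
  finally show ?thesis .
qed

section \<open>The error of the averaged projection\<close>

lemma affine_sub_diff_mem_span: "x \<in> affine_sub k u m \<Longrightarrow> x - m \<in> span (u ` {..<k})"
  unfolding affine_sub_def by (auto intro!: span_sum span_scale simp: span_base)

lemma trimmed_loss_attained:
  obtains S where "S \<subseteq> {1..n}" "card S = n - f"
    "trimmed_loss n f g k u m = (\<Sum>i\<in>S. (norm (g i - proj_aff k u m (g i)))\<^sup>2)"
proof -
  define C where "C = {S. S \<subseteq> {1..n} \<and> card S = n - f}"
  define loss where "loss S = (\<Sum>i\<in>S. (norm (g i - proj_aff k u m (g i)))\<^sup>2)" for S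
  have "trimmed_loss n f g k u m = Min (loss ` C)"
    unfolding trimmed_loss_def C_def loss_def by (rule arg_cong[where f = Min]) auto
  moreover have "finite C" unfolding C_def by (rule finite_subset[of _ "Pow {1..n}"]) auto
  moreover have "{1..n - f} \<in> C" unfolding C_def by auto
  ultimately have "trimmed_loss n f g k u m \<in> loss ` C" by (auto intro: Min_in)
  then show ?thesis using that unfolding C_def loss_def by auto
qed

lemma trimmed_loss_nonneg: "0 \<le> trimmed_loss n f g k u m"
  by (rule trimmed_loss_attained[of n f g k u m]) (simp add: sum_nonneg)

lemma obtain_honest_subset:
  assumes H: "H \<subseteq> {1..n}" "card ({1..n} - H) \<le> f" and S: "S \<subseteq> {1..n}" "card S = n - f"
  obtains T where "T \<subseteq> S \<inter> H" "card T = n - 2 * f"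
proof -
  have "finite S" using S(1) finite_subset by blast
  then have "card S = card (S \<inter> H) + card (S - H)" by (rule card_Int_Diff)
  moreover have "card (S - H) \<le> card ({1..n} - H)" using S(1) by (intro card_mono) auto
  ultimately have "n - 2 * f \<le> card (S \<inter> H)" using S(2) H(2) by simp
  then show ?thesis by (meson obtain_subset_with_card_n that)
qed

lemma norm_mean_proj_aff_sub_le:
  fixes g Eg :: "'a \<Rightarrow> 'v::real_inner"
  assumes u: "orthonormal_cols k u" and H: "finite H" "H \<noteq> {}"
  shows "(norm (mean H (\<lambda>i. proj_aff k u m (g i)) - mean H Eg))\<^sup>2
    \<le> (\<Sum>i\<in>H. (norm (g i - Eg i))\<^sup>2) / real (card H) + (norm (span_perp k u (mean H Eg - m)))\<^sup>2"
proof -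
  define P where "P = span_proj k u"
  define Q where "Q = span_perp k u"
  define e where "e = mean H (\<lambda>i. g i - Eg i)"
  have "proj_aff k u m (g i) - Eg i = P (g i - Eg i) - Q (Eg i - m)" for i
    using linear_diff[OF linear_span_proj, of k u "g i - m" "Eg i - m"]
    unfolding proj_aff_eq_span_proj P_def Q_def span_perp_def by (simp add: algebra_simps)
  then have "mean H (\<lambda>i. proj_aff k u m (g i)) - mean H Eg = mean H (\<lambda>i. P (g i - Eg i) - Q (Eg i - m))"
    by (simp add: mean_diff[symmetric])
  also have "\<dots> = P e - Q (mean H (\<lambda>i. Eg i - m))"
    unfolding e_def P_def Q_def linear_mean[OF linear_span_proj] linear_mean[OF linear_span_perp]
    by (rule mean_diff)
  also have "mean H (\<lambda>i. Eg i - m) = mean H Eg - m" using H by (simp add: mean_diff mean_const)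
  finally have err: "mean H (\<lambda>i. proj_aff k u m (g i)) - mean H Eg = P e - Q (mean H Eg - m)" .
  have "(norm (P e - Q (mean H Eg - m)))\<^sup>2 = (norm (P e))\<^sup>2 + (norm (Q (mean H Eg - m)))\<^sup>2"
    using norm_add_Pythagorean[of "P e" "- Q (mean H Eg - m)"] inner_span_proj_span_perp[OF u]
    unfolding P_def Q_def by (simp add: real_inner_class.orthogonal_def)
  moreover have "(norm (P e))\<^sup>2 \<le> (\<Sum>i\<in>H. (norm (g i - Eg i))\<^sup>2) / real (card H)"
    using norm_span_proj_le[OF u] norm_mean_sq_le[OF H] unfolding P_def e_def
    by (blast intro: order_trans)
  ultimately show ?thesis unfolding err Q_def by simp
qed

lemma norm_span_perp_sub_le:
  assumes "orthonormal_cols k u"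
  shows "(norm (span_perp k u (y - m)))\<^sup>2 \<le> 2 * (norm (x - proj_aff k u m x))\<^sup>2 + 2 * (norm (x - y))\<^sup>2"
proof -
  have "span_perp k u (x - m) = x - proj_aff k u m x"
    by (simp add: span_perp_def proj_aff_eq_span_proj)
  then have "span_perp k u (y - m) = (x - proj_aff k u m x) + - span_perp k u (x - y)"
    using linear_diff[OF linear_span_perp, of k u "x - m" "x - y"] by simp
  then have "(norm (span_perp k u (y - m)))\<^sup>2
      \<le> 2 * (norm (x - proj_aff k u m x))\<^sup>2 + 2 * (norm (span_perp k u (x - y)))\<^sup>2"
    using norm_add_sq_le[of "x - proj_aff k u m x" "- span_perp k u (x - y)"] by simp
  moreover have "(norm (span_perp k u (x - y)))\<^sup>2 \<le> (norm (x - y))\<^sup>2"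
    by (rule norm_span_perp_le[OF assms])
  ultimately show ?thesis by linarith
qed

lemma sum_norm_span_perp_le_trimmed:
  assumes u: "orthonormal_cols k u" and T: "T \<subseteq> S \<inter> H" "finite S" "finite H"
  shows "(\<Sum>i\<in>T. (norm (span_perp k u (Eg i - m)))\<^sup>2)
    \<le> 2 * (\<Sum>i\<in>S. (norm (g i - proj_aff k u m (g i)))\<^sup>2) + 2 * (\<Sum>i\<in>H. (norm (g i - Eg i))\<^sup>2)"
proof -
  have "(\<Sum>i\<in>T. (norm (span_perp k u (Eg i - m)))\<^sup>2)
      \<le> 2 * (\<Sum>i\<in>T. (norm (g i - proj_aff k u m (g i)))\<^sup>2) + 2 * (\<Sum>i\<in>T. (norm (g i - Eg i))\<^sup>2)"
    using sum_mono[of T, OF norm_span_perp_sub_le[OF u]] by (simp add: sum.distrib sum_distrib_left)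
  moreover have "(\<Sum>i\<in>T. (norm (g i - proj_aff k u m (g i)))\<^sup>2)
      \<le> (\<Sum>i\<in>S. (norm (g i - proj_aff k u m (g i)))\<^sup>2)"
    using T by (intro sum_mono2) auto
  moreover have "(\<Sum>i\<in>T. (norm (g i - Eg i))\<^sup>2) \<le> (\<Sum>i\<in>H. (norm (g i - Eg i))\<^sup>2)"
    using T by (intro sum_mono2) auto
  ultimately show ?thesis by linarith
qed

text \<open>The difference of the two means lies in the direction space of the true subspace and has norm
  at most \<open>\<delta>\<close>, so by the singular value bound its residual is controlled by the residuals of the
  centred \<open>Eg s - \<mu>\<^sub>T\<close>, which are at most the uncentred ones.\<close>

lemma norm_span_perp_mean_sub_mean_le:
  fixes Eg :: "nat \<Rightarrow> 'v::euclidean_space"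
  assumes u: "orthonormal_cols k u"
    and us: "orthonormal_cols k' us" and k': "1 \<le> k'"
    and Eg_span: "\<And>i. i \<in> H \<Longrightarrow> Eg i - ms \<in> span (us ` {..<k'})"
    and H: "finite H" and T: "T \<subseteq> H" "T \<noteq> {}"
    and outer: "\<And>i. i \<in> H \<Longrightarrow> norm (Eg i - mean H Eg) \<le> \<delta>"
    and \<sigma>: "0 < \<sigma>"
    and sing: "\<sigma> \<le> kth_singular_value k' (map (\<lambda>s. Eg s - mean T Eg) (sorted_list_of_set T))"
  shows "(norm (span_perp k u (mean H Eg - mean T Eg)))\<^sup>2
    \<le> \<delta>\<^sup>2 / \<sigma>\<^sup>2 * (\<Sum>i\<in>T. (norm (span_perp k u (Eg i - m)))\<^sup>2)"
proof -
  define Q where "Q = span_perp k u"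
  define W where "W = span (us ` {..<k'})"
  define r where "r i = Q (Eg i - m)" for i
  define vs where "vs = map (\<lambda>s. Eg s - mean T Eg) (sorted_list_of_set T)"
  have linQ: "linear Q" unfolding Q_def by (rule linear_span_perp)
  have finT: "finite T" using T H finite_subset by blast
  have W: "subspace W" unfolding W_def by simp
  have mean_W: "mean A Eg - ms \<in> W" if "A \<subseteq> H" "A \<noteq> {}" for A
    using mean_in_subspace[OF W, of A "\<lambda>i. Eg i - ms"] that Eg_span H finite_subset[OF that(1) H]
    unfolding W_def by (auto simp: mean_diff mean_const)
  have vs_W: "set vs \<subseteq> W"
  proof
    fix v assume "v \<in> set vs"
    then obtain s where s: "s \<in> T" "v = Eg s - mean T Eg" using finT unfolding vs_def by auto
    have "(Eg s - ms) - (mean T Eg - ms) \<in> W"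
      using subspace_diff[OF W _ mean_W[OF T]] Eg_span s T unfolding W_def by blast
    then show "v \<in> W" using s by simp
  qed
  have "(mean H Eg - ms) - (mean T Eg - ms) \<in> W"
    using subspace_diff[OF W mean_W[of H] mean_W[OF T]] T by auto
  then have w_W: "mean H Eg - mean T Eg \<in> W" by simp
  have "mean T r = Q (mean T Eg - m)"
    using finT T linear_mean[OF linQ, of T "\<lambda>i. Eg i - m"]
    by (simp add: r_def[abs_def] mean_diff mean_const)
  then have centred: "Q (Eg i - mean T Eg) = r i - mean T r" for i
    using linear_diff[OF linQ, of "Eg i - m" "mean T Eg - m"] by (simp add: r_def)
  have "(\<Sum>s<length vs. (norm (Q (vs ! s)))\<^sup>2) = (\<Sum>i\<in>T. (norm (Q (Eg i - mean T Eg)))\<^sup>2)"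
    unfolding vs_def by (rule sum_nth_map_sorted_list_of_set[OF finT])
  also have "\<dots> = (\<Sum>i\<in>T. (norm (r i - mean T r))\<^sup>2)" by (simp only: centred)
  also have "\<dots> \<le> (\<Sum>i\<in>T. (norm (r i))\<^sup>2)" by (rule sum_norm_sq_sub_mean_le[OF finT T(2)])
  finally have vs_le: "(\<Sum>s<length vs. (norm (Q (vs ! s)))\<^sup>2) \<le> (\<Sum>i\<in>T. (norm (r i))\<^sup>2)" .
  have "mean H Eg - mean T Eg = mean T (\<lambda>i. mean H Eg - Eg i)"
    using finT T by (simp add: mean_diff mean_const)
  then have "norm (mean H Eg - mean T Eg) \<le> \<delta>"
    using outer T finT by (auto intro!: norm_mean_le simp: norm_minus_commute)
  then have "(norm (mean H Eg - mean T Eg))\<^sup>2 \<le> \<delta>\<^sup>2" by (simp add: power_mono)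
  with vs_le have "(norm (mean H Eg - mean T Eg))\<^sup>2 / \<sigma>\<^sup>2 * (\<Sum>s<length vs. (norm (Q (vs ! s)))\<^sup>2)
      \<le> \<delta>\<^sup>2 / \<sigma>\<^sup>2 * (\<Sum>i\<in>T. (norm (r i))\<^sup>2)"
    by (intro mult_mono divide_right_mono) (auto simp: sum_nonneg)
  moreover have "(norm (Q (mean H Eg - mean T Eg)))\<^sup>2
      \<le> (norm (mean H Eg - mean T Eg))\<^sup>2 / \<sigma>\<^sup>2 * (\<Sum>s<length vs. (norm (Q (vs ! s)))\<^sup>2)"
    using norm_span_perp_le_kth_singular_value[OF us k' u vs_W[unfolded W_def] \<sigma> _ w_W[unfolded W_def]]
      sing unfolding Q_def vs_def by blast
  ultimately show ?thesis unfolding Q_def r_def by linarith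
qed

lemma norm_span_perp_mean_le:
  fixes Eg :: "nat \<Rightarrow> 'v::euclidean_space"
  assumes u: "orthonormal_cols k u"
    and us: "orthonormal_cols k' us" and k': "1 \<le> k'"
    and Eg_span: "\<And>i. i \<in> H \<Longrightarrow> Eg i - ms \<in> span (us ` {..<k'})"
    and H: "finite H" and T: "T \<subseteq> H" "T \<noteq> {}"
    and outer: "\<And>i. i \<in> H \<Longrightarrow> norm (Eg i - mean H Eg) \<le> \<delta>"
    and \<sigma>: "0 < \<sigma>"
    and sing: "\<sigma> \<le> kth_singular_value k' (map (\<lambda>s. Eg s - mean T Eg) (sorted_list_of_set T))"
  shows "(norm (span_perp k u (mean H Eg - m)))\<^sup>2
    \<le> 2 * (1 / real (card T) + \<delta>\<^sup>2 / \<sigma>\<^sup>2) * (\<Sum>i\<in>T. (norm (span_perp k u (Eg i - m)))\<^sup>2)"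
proof -
  define Q where "Q = span_perp k u"
  define r where "r i = Q (Eg i - m)" for i
  define R where "R = (\<Sum>i\<in>T. (norm (r i))\<^sup>2)"
  have linQ: "linear Q" unfolding Q_def by (rule linear_span_perp)
  have finT: "finite T" using T H finite_subset by blast
  have "mean T r = Q (mean T Eg - m)"
    using finT T linear_mean[OF linQ, of T "\<lambda>i. Eg i - m"]
    by (simp add: r_def[abs_def] mean_diff mean_const)
  then have split: "Q (mean H Eg - m) = mean T r + Q (mean H Eg - mean T Eg)"
    using linear_add[OF linQ, of "mean T Eg - m" "mean H Eg - mean T Eg"] by simp
  have "(norm (mean T r))\<^sup>2 \<le> R / real (card T)" unfolding R_def by (rule norm_mean_sq_le[OF finT T(2)])
  moreover have "(norm (Q (mean H Eg - mean T Eg)))\<^sup>2 \<le> \<delta>\<^sup>2 / \<sigma>\<^sup>2 * R"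
    unfolding Q_def R_def r_def
    by (rule norm_span_perp_mean_sub_mean_le[OF u us k' Eg_span H T outer \<sigma> sing])
  ultimately have "(norm (Q (mean H Eg - m)))\<^sup>2 \<le> 2 * (R / real (card T)) + 2 * (\<delta>\<^sup>2 / \<sigma>\<^sup>2 * R)"
    unfolding split using norm_add_sq_le[of "mean T r" "Q (mean H Eg - mean T Eg)"] by linarith
  also have "\<dots> = 2 * (1 / real (card T) + \<delta>\<^sup>2 / \<sigma>\<^sup>2) * R" by (simp add: algebra_simps)
  finally show ?thesis unfolding Q_def R_def r_def .
qed

lemma norm_mean_proj_aff_sub_mean_le:
  fixes Eg g :: "nat \<Rightarrow> 'v::euclidean_space"
  assumes H_sub: "H \<subseteq> {1..n}" and B_card: "card ({1..n} - H) \<le> f" and nf: "1 \<le> n - 2 * f"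
    and us: "orthonormal_cols k' us" and k': "1 \<le> k'"
    and aff: "\<And>i. i \<in> H \<Longrightarrow> Eg i \<in> affine_sub k' us ms"
    and outer: "\<And>i. i \<in> H \<Longrightarrow> norm (Eg i - mean H Eg) \<le> \<delta>" and \<sigma>: "0 < \<sigma>"
    and sing: "\<And>T. T \<subseteq> H \<Longrightarrow> card T = n - 2 * f \<Longrightarrow>
      \<sigma> \<le> kth_singular_value k' (map (\<lambda>s. Eg s - mean T Eg) (sorted_list_of_set T))"
    and u: "orthonormal_cols k u"
  shows "(norm (mean H (\<lambda>i. proj_aff k u m (g i)) - mean H Eg))\<^sup>2
    \<le> 2 / real (card H) * (\<Sum>i\<in>H. (norm (g i - Eg i))\<^sup>2)
      + 4 * (1 / real (n - 2 * f) + \<delta>\<^sup>2 / \<sigma>\<^sup>2)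
          * (trimmed_loss n f g k u m + (\<Sum>i\<in>H. (norm (g i - Eg i))\<^sup>2))"
proof -
  define E where "E = (\<Sum>i\<in>H. (norm (g i - Eg i))\<^sup>2)"
  define C where "C = 1 / real (n - 2 * f) + \<delta>\<^sup>2 / \<sigma>\<^sup>2"
  define R where "R = (\<lambda>T. \<Sum>i\<in>T. (norm (span_perp k u (Eg i - m)))\<^sup>2)"
  obtain S where S: "S \<subseteq> {1..n}" "card S = n - f"
    and loss: "trimmed_loss n f g k u m = (\<Sum>i\<in>S. (norm (g i - proj_aff k u m (g i)))\<^sup>2)"
    by (rule trimmed_loss_attained)
  obtain T where T: "T \<subseteq> S \<inter> H" "card T = n - 2 * f"
    using obtain_honest_subset[OF H_sub B_card S] by blast
  have fin: "finite H" "finite S" using H_sub S(1) finite_subset by blast+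
  have T_ne: "T \<noteq> {}" and H_ne: "H \<noteq> {}" using T nf by auto
  have "(norm (span_perp k u (mean H Eg - m)))\<^sup>2 \<le> 2 * C * R T"
    using norm_span_perp_mean_le[OF u us k' affine_sub_diff_mem_span[OF aff] fin(1) _ T_ne outer \<sigma>]
      T sing
    unfolding C_def R_def by auto
  moreover have "R T \<le> 2 * trimmed_loss n f g k u m + 2 * E"
    unfolding R_def E_def loss using sum_norm_span_perp_le_trimmed[OF u T(1) fin(2,1)] .
  moreover have "(norm (mean H (\<lambda>i. proj_aff k u m (g i)) - mean H Eg))\<^sup>2
      \<le> E / real (card H) + (norm (span_perp k u (mean H Eg - m)))\<^sup>2"
    unfolding E_def by (rule norm_mean_proj_aff_sub_le[OF u fin(1) H_ne])
  moreover have "2 * C * R T \<le> 4 * C * (trimmed_loss n f g k u m + E)"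
  proof -
    have "0 \<le> C" unfolding C_def by simp
    with \<open>R T \<le> _\<close> have "C * R T \<le> C * (2 * trimmed_loss n f g k u m + 2 * E)" by (rule mult_left_mono)
    then show ?thesis by (simp add: algebra_simps)
  qed
  moreover have "E / real (card H) \<le> 2 / real (card H) * E"
    unfolding E_def by (simp add: sum_nonneg divide_right_mono)
  ultimately show ?thesis unfolding E_def[symmetric] C_def[symmetric] by linarith
qed

lemma nn_integral_error_bound:
  fixes g :: "nat \<Rightarrow> 'w \<Rightarrow> 'v::euclidean_space" and M :: "'w measure"
  assumes H: "finite H" and K: "0 \<le> K"
    and pointwise: "\<And>\<omega>. \<omega> \<in> space M \<Longrightarrow> L \<omega> \<le> 2 / real (card H) * (\<Sum>i\<in>H. (norm (g i \<omega> - Eg i))\<^sup>2)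
        + K * (TL \<omega> + (\<Sum>i\<in>H. (norm (g i \<omega> - Eg i))\<^sup>2))"
    and g: "\<And>i. i \<in> H \<Longrightarrow> g i \<in> borel_measurable M"
    and TL: "TL \<in> borel_measurable M" "\<And>\<omega>. 0 \<le> TL \<omega>"
    and noise: "\<And>i. i \<in> H \<Longrightarrow> (\<integral>\<^sup>+\<omega>. ennreal ((norm (g i \<omega> - Eg i))\<^sup>2) \<partial>M) \<le> ennreal (\<epsilon>\<^sup>2)"
  shows "(\<integral>\<^sup>+\<omega>. ennreal (L \<omega>) \<partial>M)
    \<le> ennreal (2 * \<epsilon>\<^sup>2) + ennreal K * ((\<integral>\<^sup>+\<omega>. ennreal (TL \<omega>) \<partial>M) + ennreal (real (card H) * \<epsilon>\<^sup>2))"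
proof -
  define a where "a = 2 / real (card H)"
  define N where "N \<omega> = (\<Sum>i\<in>H. ennreal ((norm (g i \<omega> - Eg i))\<^sup>2))" for \<omega>
  have a: "0 \<le> a" unfolding a_def by simp
  have N_meas: "N \<in> borel_measurable M" unfolding N_def using g by measurable
  have "(\<integral>\<^sup>+\<omega>. ennreal (L \<omega>) \<partial>M) \<le> (\<integral>\<^sup>+\<omega>. ennreal a * N \<omega> + ennreal K * (ennreal (TL \<omega>) + N \<omega>) \<partial>M)"
  proof (rule nn_integral_mono)
    fix \<omega> assume "\<omega> \<in> space M"
    then have "ennreal (L \<omega>) \<le> ennreal (a * (\<Sum>i\<in>H. (norm (g i \<omega> - Eg i))\<^sup>2)
        + K * (TL \<omega> + (\<Sum>i\<in>H. (norm (g i \<omega> - Eg i))\<^sup>2)))"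
      using pointwise unfolding a_def by (intro ennreal_leI) auto
    also have "\<dots> = ennreal a * N \<omega> + ennreal K * (ennreal (TL \<omega>) + N \<omega>)"
      unfolding N_def using a TL(2) K by (simp add: ennreal_mult sum_nonneg)
    finally show "ennreal (L \<omega>) \<le> ennreal a * N \<omega> + ennreal K * (ennreal (TL \<omega>) + N \<omega>)" .
  qed
  also have "\<dots> = ennreal a * (\<integral>\<^sup>+\<omega>. N \<omega> \<partial>M) + ennreal K * ((\<integral>\<^sup>+\<omega>. ennreal (TL \<omega>) \<partial>M) + (\<integral>\<^sup>+\<omega>. N \<omega> \<partial>M))"
    using N_meas TL(1) by (simp add: nn_integral_add nn_integral_cmult)
  also have "\<dots> \<le> ennreal a * ennreal (real (card H) * \<epsilon>\<^sup>2)
      + ennreal K * ((\<integral>\<^sup>+\<omega>. ennreal (TL \<omega>) \<partial>M) + ennreal (real (card H) * \<epsilon>\<^sup>2))"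
  proof -
    have "(\<integral>\<^sup>+\<omega>. N \<omega> \<partial>M) = (\<Sum>i\<in>H. (\<integral>\<^sup>+\<omega>. ennreal ((norm (g i \<omega> - Eg i))\<^sup>2) \<partial>M))"
      unfolding N_def using g by (intro nn_integral_sum) auto
    also have "\<dots> \<le> (\<Sum>i\<in>H. ennreal (\<epsilon>\<^sup>2))" using noise by (intro sum_mono) auto
    finally have "(\<integral>\<^sup>+\<omega>. N \<omega> \<partial>M) \<le> ennreal (real (card H) * \<epsilon>\<^sup>2)"
      by (simp add: ennreal_of_nat_eq_real_of_nat ennreal_mult)
    then show ?thesis by (intro add_mono mult_left_mono add_left_mono) auto
  qed
  also have "ennreal a * ennreal (real (card H) * \<epsilon>\<^sup>2) \<le> ennreal (2 * \<epsilon>\<^sup>2)"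
    unfolding a_def by (cases "card H = 0") (auto simp: ennreal_mult[symmetric])
  finally show ?thesis by (simp add: add_right_mono)
qed

theorem mainTheorem9:
  fixes n f c :: nat and H :: "nat set" and Eg :: "nat \<Rightarrow> 'v::euclidean_space"
    and \<delta> \<sigma> :: real
  assumes c2: "c \<ge> 2" and dc: "DIM('v) \<ge> c" and nf: "n - 2 * f \<ge> 1" and f1: "f \<ge> 1"
    and H_sub: "H \<subseteq> {1..n}" and B_card: "card ({1..n} - H) \<le> f"
    and A_sub: "\<exists>u m. orthonormal_cols (c - 1) u \<and> (\<forall>i\<in>H. Eg i \<in> affine_sub (c - 1) u m)"
    and A_outer: "\<forall>i\<in>H. norm (Eg i - (1 / real (card H)) *\<^sub>R (\<Sum>i'\<in>H. Eg i')) \<le> \<delta>"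
    and \<sigma>_pos: "\<sigma> > 0"
    and A_sing: "\<forall>S. S \<subseteq> H \<and> card S = n - 2 * f \<longrightarrow>
        kth_singular_value (c - 1)
          (map (\<lambda>s. Eg s - (1 / real (n - 2 * f)) *\<^sub>R (\<Sum>s'\<in>S. Eg s')) (sorted_list_of_set S))
        \<ge> \<sigma>"
  shows
    "(\<forall>(g :: nat \<Rightarrow> 'v) (k :: nat) (u :: nat \<Rightarrow> 'v) (m :: 'v).
        orthonormal_cols k u \<longrightarrow>
        (norm ((1 / real (card H)) *\<^sub>R (\<Sum>i\<in>H. proj_aff k u m (g i))
               - (1 / real (card H)) *\<^sub>R (\<Sum>i\<in>H. Eg i)))\<^sup>2
        \<le> 2 / real (card H) * (\<Sum>i\<in>H. (norm (g i - Eg i))\<^sup>2)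
          + 4 * (1 / real (n - 2 * f) + \<delta>\<^sup>2 / \<sigma>\<^sup>2)
              * (trimmed_loss n f g k u m + (\<Sum>i\<in>H. (norm (g i - Eg i))\<^sup>2)))
     \<and>
     (\<forall>(M :: 'w measure) (g :: nat \<Rightarrow> 'w \<Rightarrow> 'v) (k :: 'w \<Rightarrow> nat) (u :: 'w \<Rightarrow> nat \<Rightarrow> 'v)
        (m :: 'w \<Rightarrow> 'v) (\<epsilon> :: real).
        prob_space M
        \<longrightarrow> (\<forall>i\<in>H. g i \<in> borel_measurable M)
        \<longrightarrow> (\<lambda>\<omega>. trimmed_loss n f (\<lambda>i. g i \<omega>) (k \<omega>) (u \<omega>) (m \<omega>)) \<in> borel_measurable M
        \<longrightarrow> (\<forall>\<omega>\<in>space M. orthonormal_cols (k \<omega>) (u \<omega>))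
        \<longrightarrow> (\<forall>i\<in>H. (\<integral>\<^sup>+\<omega>. ennreal ((norm (g i \<omega> - Eg i))\<^sup>2) \<partial>M) \<le> ennreal (\<epsilon>\<^sup>2))
        \<longrightarrow> (\<integral>\<^sup>+\<omega>. ennreal ((norm ((1 / real (card H)) *\<^sub>R (\<Sum>i\<in>H. proj_aff (k \<omega>) (u \<omega>) (m \<omega>) (g i \<omega>))
                  - (1 / real (card H)) *\<^sub>R (\<Sum>i\<in>H. Eg i)))\<^sup>2) \<partial>M)
            \<le> ennreal (2 * \<epsilon>\<^sup>2)
              + ennreal (4 * (1 / real (n - 2 * f) + \<delta>\<^sup>2 / \<sigma>\<^sup>2))
                * ((\<integral>\<^sup>+\<omega>. ennreal (trimmed_loss n f (\<lambda>i. g i \<omega>) (k \<omega>) (u \<omega>) (m \<omega>)) \<partial>M)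
                   + ennreal (real (card H) * \<epsilon>\<^sup>2)))"
proof -
  obtain us ms where us: "orthonormal_cols (c - 1) us" and aff: "\<forall>i\<in>H. Eg i \<in> affine_sub (c - 1) us ms"
    using A_sub by blast
  have c1: "1 \<le> c - 1" using c2 by simp
  have outer: "\<And>i. i \<in> H \<Longrightarrow> norm (Eg i - mean H Eg) \<le> \<delta>" using A_outer by (simp add: mean_def)
  have sing: "\<And>T. T \<subseteq> H \<Longrightarrow> card T = n - 2 * f \<Longrightarrow>
      \<sigma> \<le> kth_singular_value (c - 1) (map (\<lambda>s. Eg s - mean T Eg) (sorted_list_of_set T))"
    using A_sing by (simp add: mean_def)
  note bound = norm_mean_proj_aff_sub_mean_le[OF H_sub B_card nf us c1 bspec[OF aff] outer \<sigma>_pos sing]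
  have "finite H" using H_sub finite_subset by blast
  show ?thesis
    unfolding mean_def[symmetric]
    apply (intro conjI allI impI)
    subgoal by (rule bound)
    subgoal premises prems for M g k u m \<epsilon>
      using prems
      by (intro nn_integral_error_bound[OF \<open>finite H\<close>, where g = g and Eg = Eg] bound)
        (auto intro: trimmed_loss_nonneg)
    done
qed

end
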